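(* Setting. Work under the setting of the context, in particular under condition [A]. Conclusion. There exists $\Delta>0$ with the following property. Let $x=x_n$ satisfy $x_n/n\to\alpha_0$ with $|a-\alpha_0|\le\Delta$, and let $\kappa_n\to0$. Set $$\mathcal B_n:=\{(m,y)\in\mathbb Z^2:1\le m\le[n\kappa_n],\ 1\le|y|\le[n\kappa_n]\}.$$ Then there are functions $\varepsilon_n(m,y)$ and $\theta_n(m,y)$ on $\mathcal B_n$ such that for all $(m,y)\in\mathcal B_n$ $$-nD\Big(1-\frac mn,\frac xn-\frac yn\Big)=-nD\Big(1,\frac xn\Big)+\Big(\lambda\big(\tfrac xn\big)+\varepsilon_n\Big)m+\Big(\mu\big(\tfrac xn\big)+\theta_n\Big)y,$$ and $$\beta_n:=\max_{(m,y)\in\mathcal B_n}\big(|\varepsilon_n(m,y)|+|\theta_n(m,y)|\big)\to0\quad\text{as }n\to\infty.$$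
   Context: Parameters and condition [A]. Fix an integer $v\ge1$ and $\mathbf p_{kj}\in(0,1)$, $k\ge0$, $1\le j\le2^{v-1}$, where $j$ numbers the binary words of length $v$ ending in $1$. Condition [A]: (i) the initial configuration contains a $1$; (ii) there are constants $1>\delta_1>\delta_2>0$ with $\delta_2\le\mathbf p_{kj}\le\delta_1$. Chain. Given $r(n)$, let $m_n=\sup\{i\le n:r_i(n)=1\}$. A new symbol $1$ is appended with probability $\mathbf p_{k_nj_n}$ and $0$ otherwise, where $k_n=n-m_n$ and $j_n$ is the number of the word $(r_{m_n-v+1}(n),\dots,r_{m_n}(n))$. Auxiliary Markov chain and the vector $(\tau,\zeta)$. $Y(n)=(n-m_n,(r_{m_n-v+1}(n),\dots,r_{m_n}(n)))$ and $y_0=(0,(0,\dots,0,1))$. Start $Y$ at $y_0$. Then $\tau$ is its first return time to $y_0$, and $\zeta$ is the number of $1$'s appended during the first $\tau$ steps. Parameters. $a=\mathbf E\zeta/\mathbf E\tau$ and $A(\lambda,\mu)=\ln\mathbf Ee^{\lambda\tau+\mu\zeta}$. Define $D(\theta,\alpha)=\sup\{\lambda\theta+\mu\alpha:A(\lambda,\mu)\le0\}$ and $D(\alpha)=D(1,\alpha)$. For $\alpha$ near $a$, $(\lambda(\alpha),\mu(\alpha))$ denotes the point with $A(\lambda(\alpha),\mu(\alpha))=0$ at which this supremum (with $\theta=1$) is attained, so $D(\alpha)=\lambda(\alpha)+\alpha\mu(\alpha)$. *)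

theory Defs
  imports "HOL-Analysis.Analysis"
begin

text \<open>States of the auxiliary Markov chain Y: pairs (k, w), where k = n - m_n and
  w is the binary word (r_{m_n-v+1},...,r_{m_n}) of length v ending in 1 (True = symbol 1).
  The parameters p_{kj} are indexed directly by the word w instead of its number j.\<close>

type_synonym state = "nat \<times> bool list"

definition last_v :: "nat \<Rightarrow> bool list \<Rightarrow> bool list" where
  "last_v v xs = drop (length xs - v) xs"

definition y0 :: "nat \<Rightarrow> state" where
  "y0 v = (0, replicate (v - 1) False @ [True])"

definition ystep :: "nat \<Rightarrow> state \<Rightarrow> bool \<Rightarrow> state" where
  "ystep v s b = (if b then (0, last_v v (snd s @ replicate (fst s) False @ [True]))
                  else (Suc (fst s), snd s))"

definition trans_prob :: "(nat \<Rightarrow> bool list \<Rightarrow> real) \<Rightarrow> state \<Rightarrow> bool \<Rightarrow> real" where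
  "trans_prob p s b = (if b then p (fst s) (snd s) else 1 - p (fst s) (snd s))"

fun path_prob :: "(nat \<Rightarrow> bool list \<Rightarrow> real) \<Rightarrow> nat \<Rightarrow> state \<Rightarrow> bool list \<Rightarrow> real" where
  "path_prob p v s [] = 1"
| "path_prob p v s (b # bs) = trans_prob p s b * path_prob p v (ystep v s b) bs"

definition yrun :: "nat \<Rightarrow> state \<Rightarrow> bool list \<Rightarrow> state" where
  "yrun v s bs = foldl (ystep v) s bs"

text \<open>Sequences of appended symbols along which Y, started at y0, returns to y0 for the
  first time exactly at the end: these are the outcomes of the first excursion; tau is the
  length and zeta the number of appended 1's.\<close>
definition first_return :: "nat \<Rightarrow> bool list \<Rightarrow> bool" where
  "first_return v bs \<longleftrightarrow> bs \<noteq> [] \<and> yrun v (y0 v) bs = y0 v \<and>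
     (\<forall>i. 0 < i \<and> i < length bs \<longrightarrow> yrun v (y0 v) (take i bs) \<noteq> y0 v)"

definition tau_of :: "bool list \<Rightarrow> nat" where "tau_of bs = length bs"
definition zeta_of :: "bool list \<Rightarrow> nat" where "zeta_of bs = count_list bs True"

definition excursion_E :: "(nat \<Rightarrow> bool list \<Rightarrow> real) \<Rightarrow> nat \<Rightarrow> (nat \<Rightarrow> nat \<Rightarrow> real) \<Rightarrow> ennreal" where
  "excursion_E p v f = (\<integral>\<^sup>+ bs. (if first_return v bs
       then ennreal (path_prob p v (y0 v) bs * f (tau_of bs) (zeta_of bs)) else 0) \<partial>count_space UNIV)"

definition a_param :: "(nat \<Rightarrow> bool list \<Rightarrow> real) \<Rightarrow> nat \<Rightarrow> real" where
  "a_param p v = enn2real (excursion_E p v (\<lambda>t z. real z)) / enn2real (excursion_E p v (\<lambda>t z. real t))"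

definition A_fun :: "(nat \<Rightarrow> bool list \<Rightarrow> real) \<Rightarrow> nat \<Rightarrow> real \<Rightarrow> real \<Rightarrow> ereal" where
  "A_fun p v l m = (let E = excursion_E p v (\<lambda>t z. exp (l * real t + m * real z)) in
      if E = \<infinity> then \<infinity> else ereal (ln (enn2real E)))"

definition D_fun :: "(nat \<Rightarrow> bool list \<Rightarrow> real) \<Rightarrow> nat \<Rightarrow> real \<Rightarrow> real \<Rightarrow> real" where
  "D_fun p v \<theta> \<alpha> = Sup {l * \<theta> + m * \<alpha> | l m. A_fun p v l m \<le> 0}"

definition lam_mu :: "(nat \<Rightarrow> bool list \<Rightarrow> real) \<Rightarrow> nat \<Rightarrow> real \<Rightarrow> real \<times> real" where
  "lam_mu p v \<alpha> = (SOME (l, m). A_fun p v l m = 0 \<and> l + \<alpha> * m = D_fun p v 1 \<alpha>)"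

definition lam :: "(nat \<Rightarrow> bool list \<Rightarrow> real) \<Rightarrow> nat \<Rightarrow> real \<Rightarrow> real" where
  "lam p v \<alpha> = fst (lam_mu p v \<alpha>)"
definition mu :: "(nat \<Rightarrow> bool list \<Rightarrow> real) \<Rightarrow> nat \<Rightarrow> real \<Rightarrow> real" where
  "mu p v \<alpha> = snd (lam_mu p v \<alpha>)"

definition B_set :: "real \<Rightarrow> nat \<Rightarrow> (int \<times> int) set" where
  "B_set \<kappa> n = {(m, y). 1 \<le> m \<and> m \<le> \<lfloor>real n * \<kappa>\<rfloor> \<and> 1 \<le> \<bar>y\<bar> \<and> \<bar>y\<bar> \<le> \<lfloor>real n * \<kappa>\<rfloor>}"

end

theory Submission
  imports Defs
begin

text \<open>
  The excursion of \<open>Y\<close> from \<open>y0\<close> has a geometric tail: from every state, \<open>v - 1\<close> zeros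
  followed by a one lead back to \<open>y0\<close>. Hence \<open>E exp (\<lambda> \<tau> + \<mu> \<zeta>)\<close> is finite, and therefore
  continuous, near the origin; it is strictly convex because \<open>(\<tau>, \<zeta>)\<close> is not supported on a line.
  \<open>D\<close> is the support function of the convex set \<open>C = {A \<le> 0}\<close>, and the first order bound
  \<open>E exp (c \<bullet> (\<tau>, \<zeta>)) > 1 + c \<bullet> (E \<tau>, E \<zeta>)\<close> for \<open>c \<noteq> 0\<close> makes the origin the unique support
  point of \<open>C\<close> in the direction \<open>(1, a)\<close>. By compactness and strict convexity, for directions
  \<open>u\<close> near \<open>(1, a)\<close> the support point \<open>M u = (\<lambda>, \<mu>)\<close> is unique, lies on \<open>{A = 0}\<close> and depends
  continuously on \<open>u\<close>. Finally \<open>D u' - D u\<close> lies between \<open>M u \<bullet> (u' - u)\<close> and \<open>M u' \<bullet> (u' - u)\<close>;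
  for \<open>u = (1, x/n)\<close> and \<open>u' = u - (m, y)/n\<close> this gives the expansion with an error of size at
  most \<open>2 |M u' - M u|\<close>, which tends to \<open>0\<close> uniformly on \<open>B\<^sub>n\<close> by continuity of \<open>M\<close>.
\<close>

lemma add_one_less_exp:
  fixes x :: real
  assumes "x \<noteq> 0"
  shows "1 + x < exp x"
proof (cases "x < -2")
  case True
  then show ?thesis
    using exp_gt_zero[of x] by linarith
next
  case False
  have "1 + x < 1 + x + (x / 2)\<^sup>2"
    using assms by simp
  also have "\<dots> = (1 + x / 2)\<^sup>2"
    by (simp add: power2_eq_square algebra_simps)
  also have "\<dots> \<le> exp (x / 2) ^ 2"
    using False exp_ge_add_one_self[of "x / 2"] by (intro power_mono) auto
  also have "\<dots> = exp x"
    by (simp add: power2_eq_square exp_add[symmetric])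
  finally show ?thesis .
qed

lemma exp_strict_convex:
  fixes x y t :: real
  assumes "0 < t" "t < 1" "x \<noteq> y"
  shows "exp ((1 - t) * x + t * y) < (1 - t) * exp x + t * exp y"
proof -
  define m where "m = (1 - t) * x + t * y"
  have "x - m \<noteq> 0"
    using assms by (simp add: m_def algebra_simps)
  then have "(1 - t) * (exp m * (1 + (x - m))) + t * (exp m * (1 + (y - m)))
      < (1 - t) * (exp m * exp (x - m)) + t * (exp m * exp (y - m))"
    using assms add_one_less_exp exp_ge_add_one_self[of "y - m"]
    by (intro add_less_le_mono mult_strict_left_mono mult_left_mono) auto
  moreover have "(1 - t) * (exp m * (1 + (x - m))) + t * (exp m * (1 + (y - m))) = exp m"
    by (simp add: m_def algebra_simps)
  ultimately show ?thesis
    by (simp add: m_def exp_diff)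
qed

lemma suminf_strict_mono:
  fixes f g :: "nat \<Rightarrow> real"
  assumes "\<And>n. f n \<le> g n" "f m < g m" "summable f" "summable g"
  shows "suminf f < suminf g"
proof -
  have "0 < (\<Sum>n. g n - f n)"
    using assms by (subst suminf_pos_iff) (auto intro: summable_diff)
  then show ?thesis
    using suminf_diff[OF assms(4,3)] by simp
qed

lemma summable_exp_moment_if_geometric:
  fixes a :: "nat \<Rightarrow> real"
  assumes "0 < \<rho>" "\<rho> < 1" "\<And>n. 0 \<le> a n" "\<And>n. a n \<le> K * \<rho> ^ n"
  shows "\<exists>R>0. summable (\<lambda>n. a n * exp (R * real n))"
proof (intro exI conjI)
  define \<gamma> where "\<gamma> = (1 + \<rho>) / 2"
  have \<gamma>: "\<rho> < \<gamma>" "\<gamma> < 1"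
    using assms by (auto simp: \<gamma>_def)
  show "0 < ln (\<gamma> / \<rho>)"
    using assms \<gamma> by simp
  have "a n * exp (ln (\<gamma> / \<rho>) * real n) \<le> K * \<gamma> ^ n" for n
  proof -
    have "exp (ln (\<gamma> / \<rho>) * real n) = exp (ln (\<gamma> / \<rho>)) ^ n"
      by (metis exp_of_nat_mult mult.commute)
    then have "exp (ln (\<gamma> / \<rho>) * real n) = (\<gamma> / \<rho>) ^ n"
      using assms \<gamma> by simp
    then have "a n * exp (ln (\<gamma> / \<rho>) * real n) \<le> K * \<rho> ^ n * (\<gamma> / \<rho>) ^ n"
      using assms \<gamma> by (simp add: mult_right_mono less_imp_le)
    also have "\<dots> = K * \<gamma> ^ n"
      using assms by (simp add: power_divide)
    finally show ?thesis .
  qed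
  then show "summable (\<lambda>n. a n * exp (ln (\<gamma> / \<rho>) * real n))"
    using assms \<gamma> by (intro summable_comparison_test'[OF summable_mult[OF summable_geometric]]) auto
qed

lemma finite_lists_length_bool: "finite {bs :: bool list. length bs = n}"
  using finite_lists_length_eq[of "UNIV :: bool set" n] by simp

lemma sum_lists_length_Suc:
  fixes F :: "bool list \<Rightarrow> 'a::comm_monoid_add"
  shows "(\<Sum>bs | length bs = Suc n. F bs) = (\<Sum>bs | length bs = n. F (True # bs) + F (False # bs))"
proof -
  let ?A = "{bs :: bool list. length bs = n}"
  have "{bs :: bool list. length bs = Suc n} = Cons True ` ?A \<union> Cons False ` ?A"
    by (auto simp: length_Suc_conv)
  then have "(\<Sum>bs | length bs = Suc n. F bs) = (\<Sum>bs\<in>Cons True ` ?A. F bs) + (\<Sum>bs\<in>Cons False ` ?A. F bs)"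
    by (simp only:) (rule sum.union_disjoint, auto simp: finite_lists_length_bool)
  then show ?thesis
    by (simp add: sum.reindex sum.distrib)
qed

lemma sum_UNIV_bool: "(\<Sum>b\<in>UNIV. f b) = f True + f False"
  by (simp add: UNIV_bool add.commute)

lemma abs_fst_add_abs_snd_le: "\<bar>fst z\<bar> + \<bar>snd z\<bar> \<le> 2 * norm (z :: real \<times> real)"
  using norm_fst_le[of "fst z" "snd z"] norm_snd_le[of "snd z" "fst z"] by simp

lemma dist_Pair_le_sum_abs: "dist (a, b) (c, d) \<le> \<bar>a - c\<bar> + \<bar>b - (d::real)\<bar>"
  using sqrt_sum_squares_le_sum_abs[of "a - c" "b - d"] by (simp add: dist_Pair_Pair dist_real_def)

lemma Max_insert_0_tendsto_0:
  fixes A :: "nat \<Rightarrow> real set"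
  assumes "\<And>n. finite (A n)" and small: "\<And>e. 0 < e \<Longrightarrow> \<forall>\<^sub>F n in sequentially. \<forall>z\<in>A n. z \<le> e"
  shows "(\<lambda>n. Max (insert 0 (A n))) \<longlonglongrightarrow> 0"
proof (rule order_tendstoI)
  fix a :: real assume "a < 0"
  then show "\<forall>\<^sub>F n in sequentially. a < Max (insert 0 (A n))"
    using assms(1) by (intro always_eventually allI) (meson Max_ge finite_insert insertI1 less_le_trans)
next
  fix a :: real assume "0 < a"
  then show "\<forall>\<^sub>F n in sequentially. Max (insert 0 (A n)) < a"
    using small[of "a / 2"] assms(1) by (auto elim!: eventually_mono)
qed

section \<open>Support points of a strictly convex sublevel set\<close>

lemma compact_argmax_stable:
  fixes S :: "'a::real_inner set"
  assumes "compact S" "z \<in> S" and strict: "\<And>c. c \<in> S \<Longrightarrow> c \<noteq> z \<Longrightarrow> inner c u < inner z u"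
    and "0 < e"
  shows "\<exists>d>0. \<forall>u'. dist u' u < d \<longrightarrow> (\<forall>c\<in>S. inner z u' \<le> inner c u' \<longrightarrow> dist c z < e)"
proof (cases "S - ball z e = {}")
  case True
  then show ?thesis
    by (intro exI[of _ 1]) (auto simp: dist_commute)
next
  case False
  have "compact (S - ball z e)"
    unfolding Diff_eq using assms(1) by (intro compact_Int_closed) auto
  moreover have "continuous_on (S - ball z e) (\<lambda>c. inner c u)"
    by (intro continuous_intros)
  ultimately obtain c0 where c0: "c0 \<in> S - ball z e"
    and c0_max: "\<And>c. c \<in> S - ball z e \<Longrightarrow> inner c u \<le> inner c0 u"
    using continuous_attains_sup[OF _ False] by blast
  define \<eta> where "\<eta> = inner z u - inner c0 u"
  have "0 < \<eta>"
    using c0 strict[of c0] \<open>0 < e\<close> by (cases "c0 = z") (auto simp: \<eta>_def)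
  obtain B where B: "\<And>c. c \<in> S \<Longrightarrow> norm (c - z) \<le> B" "0 < B"
    using compact_imp_bounded[OF compact_translation[OF assms(1), of "- z"]]
    by (auto simp: bounded_pos)
  show ?thesis
  proof (intro exI[of _ "\<eta> / (2 * B)"] conjI allI impI ballI)
    show "0 < \<eta> / (2 * B)"
      using \<open>0 < \<eta>\<close> B(2) by simp
    fix u' c assume u': "dist u' u < \<eta> / (2 * B)" and "c \<in> S" and ge: "inner z u' \<le> inner c u'"
    show "dist c z < e"
    proof (rule ccontr)
      assume "\<not> dist c z < e"
      then have "inner c u \<le> inner z u - \<eta>"
        using c0_max[of c] \<open>c \<in> S\<close> by (auto simp: \<eta>_def dist_commute)
      moreover have "inner (c - z) (u' - u) \<le> norm (c - z) * norm (u' - u)"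
        by (rule norm_cauchy_schwarz)
      moreover have "norm (c - z) * norm (u' - u) \<le> B * (\<eta> / (2 * B))"
        using B \<open>c \<in> S\<close> u' by (intro mult_mono) (auto simp: dist_norm)
      moreover have "B * (\<eta> / (2 * B)) = \<eta> / 2"
        using B(2) by simp
      ultimately show False
        using ge \<open>0 < \<eta>\<close> by (simp add: inner_diff_left inner_diff_right)
    qed
  qed
qed

lemma interior_not_argmax:
  fixes C :: "'a::real_inner set"
  assumes "c \<in> interior C" "u \<noteq> 0"
  shows "\<exists>c'\<in>C. inner c u < inner c' u"
proof -
  obtain \<epsilon> where "0 < \<epsilon>" "ball c \<epsilon> \<subseteq> C"
    using assms(1) by (auto simp: mem_interior)
  moreover have "c + (\<epsilon> / (2 * norm u)) *\<^sub>R u \<in> ball c \<epsilon>"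
    using \<open>0 < \<epsilon>\<close> assms(2) by (simp add: dist_norm)
  moreover have "inner c u < inner (c + (\<epsilon> / (2 * norm u)) *\<^sub>R u) u"
    using \<open>0 < \<epsilon>\<close> assms(2) by (simp add: inner_add_left)
  ultimately show ?thesis
    by blast
qed

locale strictly_convex_sublevel =
  fixes E :: "'a::euclidean_space \<Rightarrow> real" and C :: "'a set" and r :: real and u0 :: 'a
  assumes convex_C: "convex C"
    and r_pos: "0 < r"
    and continuous_E: "continuous_on (ball 0 r) E"
    and C_ball: "\<And>c. c \<in> ball 0 r \<Longrightarrow> c \<in> C \<longleftrightarrow> E c \<le> 1"
    and E_strict: "\<And>c1 c2 t. c1 \<in> C \<Longrightarrow> c2 \<in> C \<Longrightarrow> c1 \<noteq> c2 \<Longrightarrow> 0 < t \<Longrightarrow> t < 1 \<Longrightarrow>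
      E ((1 - t) *\<^sub>R c1 + t *\<^sub>R c2) < 1"
    and zero_in_C: "0 \<in> C"
    and u0_argmax: "\<And>c. c \<in> C \<Longrightarrow> c \<noteq> 0 \<Longrightarrow> inner c u0 < 0"
    and u0_nonzero: "u0 \<noteq> 0"
begin

definition core :: "'a set" where
  "core = C \<inter> cball 0 (r / 2)"

lemma compact_core: "compact core"
proof -
  have "core = {c \<in> cball 0 (r / 2). E c \<le> 1}"
    using C_ball r_pos by (auto simp: core_def)
  moreover have "closed {c \<in> cball 0 (r / 2). E c \<le> 1}"
    using continuous_on_subset[OF continuous_E] r_pos
    by (intro continuous_on_closed_Collect_le continuous_on_const) (auto simp: subset_eq)
  moreover have "bounded core"
    by (rule bounded_subset[OF bounded_cball]) (auto simp: core_def)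
  ultimately show ?thesis
    by (simp add: compact_eq_bounded_closed)
qed

lemma zero_in_core: "0 \<in> core"
  using zero_in_C r_pos by (simp add: core_def)

text \<open>For localizing \<open>u\<close>, the maximizers of \<open>c \<bullet> u\<close> over \<open>C\<close> lie in the compact set \<open>core\<close>,
  inside the ball on which \<open>C\<close> is the sublevel set of the continuous function \<open>E\<close>.\<close>

definition localizing :: "'a \<Rightarrow> bool" where
  "localizing u \<longleftrightarrow> u \<noteq> 0 \<and> (\<forall>c\<in>C. 0 \<le> inner c u \<longrightarrow> norm c < r / 2)"

lemma localizing_near_u0: "\<exists>\<delta>>0. \<forall>u\<in>ball u0 \<delta>. localizing u"
proof -
  have "r / 2 > 0"
    using r_pos by simp
  then obtain \<delta> where "0 < \<delta>" and
    small: "\<And>u c. dist u u0 < \<delta> \<Longrightarrow> c \<in> core \<Longrightarrow> 0 \<le> inner c u \<Longrightarrow> norm c < r / 2"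
    using compact_argmax_stable[OF compact_core zero_in_core, of u0 "r / 2"] u0_argmax
    by (auto simp: core_def)
  have "localizing u" if "dist u u0 < min \<delta> (norm u0)" for u
    unfolding localizing_def
  proof (intro conjI ballI impI)
    show "u \<noteq> 0"
      using that by auto
    fix c assume "c \<in> C" "0 \<le> inner c u"
    show "norm c < r / 2"
    proof (rule ccontr)
      assume "\<not> norm c < r / 2"
      \<comment> \<open>shrinking \<open>c\<close> towards \<open>0 \<in> C\<close> gives a point of \<open>core\<close> of norm \<open>r / 2\<close>\<close>
      define c' where "c' = (r / 2 / norm c) *\<^sub>R c"
      have "0 < norm c"
        using r_pos \<open>\<not> norm c < r / 2\<close> by linarith
      have "c' = (1 - r / 2 / norm c) *\<^sub>R 0 + (r / 2 / norm c) *\<^sub>R c"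
        by (simp add: c'_def)
      moreover have "0 \<le> r / 2 / norm c" "r / 2 / norm c \<le> 1"
        using r_pos \<open>\<not> norm c < r / 2\<close> by (auto simp: divide_le_eq_1)
      ultimately have "c' \<in> C"
        using convexD[OF convex_C zero_in_C \<open>c \<in> C\<close>, of "1 - r / 2 / norm c" "r / 2 / norm c"] by simp
      moreover have "norm c' = r / 2"
        using r_pos \<open>0 < norm c\<close> by (simp add: c'_def)
      moreover have "0 \<le> inner c' u"
        using r_pos \<open>0 \<le> inner c u\<close> by (simp add: c'_def)
      ultimately show False
        using small[of u c'] that \<open>0 < \<delta>\<close> by (simp add: core_def)
    qed
  qed
  then show ?thesis
    using \<open>0 < \<delta>\<close> u0_nonzero by (intro exI[of _ "min \<delta> (norm u0)"]) (auto simp: dist_commute)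
qed

definition is_argmax :: "'a \<Rightarrow> 'a \<Rightarrow> bool" where
  "is_argmax u c \<longleftrightarrow> c \<in> C \<and> (\<forall>c'\<in>C. inner c' u \<le> inner c u)"

lemma is_argmax_norm: "localizing u \<Longrightarrow> is_argmax u c \<Longrightarrow> norm c < r / 2"
  using zero_in_C by (auto simp: localizing_def is_argmax_def)

lemma is_argmax_in_core: "localizing u \<Longrightarrow> is_argmax u c \<Longrightarrow> c \<in> core"
  using is_argmax_norm[of u c] by (simp add: core_def is_argmax_def)

lemma is_argmax_exists: "localizing u \<Longrightarrow> \<exists>c. is_argmax u c"
proof -
  assume u: "localizing u"
  have "continuous_on core (\<lambda>c. inner c u)"
    by (intro continuous_intros)
  then obtain c where "c \<in> core" and c_max: "\<And>c'. c' \<in> core \<Longrightarrow> inner c' u \<le> inner c u"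
    using continuous_attains_sup[OF compact_core] zero_in_core by blast
  have "0 \<le> inner c u"
    using c_max[OF zero_in_core] by simp
  have "inner c' u \<le> inner c u" if "c' \<in> C" for c'
  proof (cases "0 \<le> inner c' u")
    case True
    then show ?thesis
      using u that c_max[of c'] by (force simp: localizing_def core_def)
  next
    case False
    then show ?thesis
      using \<open>0 \<le> inner c u\<close> by simp
  qed
  then show ?thesis
    using \<open>c \<in> core\<close> by (auto simp: is_argmax_def core_def)
qed

lemma is_argmax_E_eq_1:
  assumes "localizing u" "is_argmax u c"
  shows "E c = 1"
proof (rule ccontr)
  have c: "c \<in> ball 0 r" "c \<in> C"
    using is_argmax_norm[OF assms] assms r_pos by (auto simp: is_argmax_def)
  assume "E c \<noteq> 1"
  then have "c \<in> ball 0 r \<inter> E -` {..<1}"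
    using C_ball c by auto
  moreover have "ball 0 r \<inter> E -` {..<1} \<subseteq> interior C"
    using C_ball continuous_open_preimage[OF continuous_E open_ball open_lessThan]
    by (intro interior_maximal) auto
  ultimately have "c \<in> interior C"
    by blast
  then obtain c' where "c' \<in> C" "inner c u < inner c' u"
    using interior_not_argmax assms(1) unfolding localizing_def by blast
  then show False
    using assms(2) unfolding is_argmax_def by (meson leD)
qed

lemma is_argmax_unique:
  assumes "localizing u" "is_argmax u c1" "is_argmax u c2"
  shows "c1 = c2"
proof (rule ccontr)
  assume "c1 \<noteq> c2"
  define m where "m = (1 / 2 :: real) *\<^sub>R c1 + (1 / 2 :: real) *\<^sub>R c2"
  have C: "c1 \<in> C" "c2 \<in> C"
    using assms by (simp_all add: is_argmax_def)
  have "E m < 1"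
    using E_strict[OF C \<open>c1 \<noteq> c2\<close>, of "1 / 2"] by (simp add: m_def)
  have "inner c1 u = inner c2 u"
    using assms C unfolding is_argmax_def by (meson order.antisym)
  then have "inner m u = inner c1 u"
    by (simp add: m_def inner_add_left)
  moreover have "m \<in> C"
    using convexD[OF convex_C C, of "1 / 2" "1 / 2"] by (simp add: m_def)
  ultimately have "is_argmax u m"
    using assms(2) by (simp add: is_argmax_def)
  then show False
    using is_argmax_E_eq_1[OF assms(1)] \<open>E m < 1\<close> by simp
qed

definition argmax :: "'a \<Rightarrow> 'a" where
  "argmax u = (SOME c. is_argmax u c)"

lemma is_argmax_argmax: "localizing u \<Longrightarrow> is_argmax u (argmax u)"
  unfolding argmax_def by (rule someI_ex) (rule is_argmax_exists)

lemma is_argmax_eq_argmax: "localizing u \<Longrightarrow> is_argmax u c \<Longrightarrow> c = argmax u"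
  using is_argmax_argmax is_argmax_unique by blast

lemma argmax_continuous: "localizing u \<Longrightarrow> continuous (at u within Collect localizing) argmax"
proof -
  assume u: "localizing u"
  have strict: "inner c u < inner (argmax u) u" if "c \<in> core" "c \<noteq> argmax u" for c
  proof -
    have "c \<in> C" "inner c u \<le> inner (argmax u) u"
      using is_argmax_argmax[OF u] that(1) by (auto simp: is_argmax_def core_def)
    moreover have "\<not> is_argmax u c"
      using is_argmax_eq_argmax[OF u] that(2) by blast
    ultimately show ?thesis
      using is_argmax_argmax[OF u] by (auto simp: is_argmax_def)
  qed
  show ?thesis
    unfolding continuous_within_eps_delta
  proof (intro allI impI)
    fix e :: real assume "0 < e"
    then obtain d where "0 < d" and
      close: "\<And>u' c. dist u' u < d \<Longrightarrow> c \<in> core \<Longrightarrow> inner (argmax u) u' \<le> inner c u' \<Longrightarrow> dist c (argmax u) < e"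
      using compact_argmax_stable[OF compact_core is_argmax_in_core[OF u is_argmax_argmax[OF u]] strict]
      by blast
    have "dist (argmax u') (argmax u) < e" if "localizing u'" "dist u' u < d" for u'
      using close[OF that(2) is_argmax_in_core[OF that(1) is_argmax_argmax[OF that(1)]]]
        is_argmax_argmax[OF that(1)] is_argmax_argmax[OF u]
      by (simp add: is_argmax_def)
    then show "\<exists>d>0. \<forall>u'\<in>Collect localizing. dist u' u < d \<longrightarrow> dist (argmax u') (argmax u) < e"
      using \<open>0 < d\<close> by auto
  qed
qed

end

section \<open>Linear expansion of a support function\<close>

text \<open>Solves \<open>e m + t y = d\<close>; when \<open>a m + b y \<le> d \<le> 0\<close>, the solution is \<open>s (a, b)\<close> with
  \<open>0 \<le> s \<le> 1\<close>.\<close>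

definition split_coeffs :: "real \<Rightarrow> real \<Rightarrow> real \<Rightarrow> real \<Rightarrow> real \<Rightarrow> real \<times> real" where
  "split_coeffs a b m y d =
     (if a * m + b * y = 0 then (d / m, 0) else (d / (a * m + b * y) * a, d / (a * m + b * y) * b))"

lemma split_coeffs_eq:
  assumes "m \<noteq> 0"
  shows "fst (split_coeffs a b m y d) * m + snd (split_coeffs a b m y d) * y = d"
proof (cases "a * m + b * y = 0")
  case False
  have "d / (a * m + b * y) * a * m + d / (a * m + b * y) * b * y = d / (a * m + b * y) * (a * m + b * y)"
    by (simp only: distrib_left mult.assoc)
  then show ?thesis
    using False by (simp add: split_coeffs_def)
qed (use assms in \<open>simp add: split_coeffs_def\<close>)

lemma split_coeffs_bound:
  assumes "a * m + b * y \<le> d" "d \<le> 0"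
  shows "\<bar>fst (split_coeffs a b m y d)\<bar> + \<bar>snd (split_coeffs a b m y d)\<bar> \<le> \<bar>a\<bar> + \<bar>b\<bar>"
proof (cases "a * m + b * y = 0")
  case False
  define s where "s = d / (a * m + b * y)"
  have "0 \<le> s" "s \<le> 1"
    using assms False by (auto simp: s_def divide_nonpos_neg divide_le_eq_1)
  then have "\<bar>s * a\<bar> \<le> \<bar>a\<bar>" "\<bar>s * b\<bar> \<le> \<bar>b\<bar>"
    by (simp_all add: abs_mult mult_left_le_one_le)
  then show ?thesis
    using False by (simp add: split_coeffs_def s_def)
qed (use assms in \<open>simp add: split_coeffs_def\<close>)

lemma support_increment_bounds:
  fixes a a' u u' w :: "'a::real_inner"
  assumes "0 < n" "Du = inner a u" "Du' = inner a' u'" "inner a u' \<le> Du'" "inner a' u \<le> Du"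
    and "u - u' = (1 / n) *\<^sub>R w"
  shows "inner (a' - a) w \<le> n * (Du - Du') - inner a w" and "n * (Du - Du') - inner a w \<le> 0"
proof -
  have w: "w = n *\<^sub>R (u - u')"
    using assms(1,6) by simp
  show "inner (a' - a) w \<le> n * (Du - Du') - inner a w"
    using assms(1,3,5) by (simp add: w inner_diff_left inner_diff_right algebra_simps mult_left_mono)
  show "n * (Du - Du') - inner a w \<le> 0"
    using assms(1,2,4) by (simp add: w inner_diff_right algebra_simps mult_left_mono)
qed

lemma finite_B_set: "finite (B_set \<kappa> n)"
  by (rule finite_subset[of _ "{-\<lfloor>real n * \<kappa>\<rfloor>..\<lfloor>real n * \<kappa>\<rfloor>} \<times> {-\<lfloor>real n * \<kappa>\<rfloor>..\<lfloor>real n * \<kappa>\<rfloor>}"])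
    (auto simp: B_set_def)

lemma B_set_points_converge:
  assumes x: "(\<lambda>n. x n / real n) \<longlonglongrightarrow> \<alpha>0" and \<kappa>: "\<kappa> \<longlonglongrightarrow> 0" and "0 < e"
  shows "\<forall>\<^sub>F n in sequentially. \<forall>(m, y) \<in> B_set (\<kappa> n) n.
    dist (1 - real_of_int m / real n, x n / real n - real_of_int y / real n) (1, \<alpha>0) < e"
proof -
  have "\<forall>\<^sub>F n in sequentially. \<bar>x n / real n - \<alpha>0\<bar> < e / 2"
    using tendstoD[OF x, of "e / 2"] \<open>0 < e\<close> by (simp add: dist_real_def)
  moreover have "\<forall>\<^sub>F n in sequentially. \<bar>\<kappa> n\<bar> < e / 4"
    using tendstoD[OF \<kappa>, of "e / 4"] \<open>0 < e\<close> by simp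
  moreover have "\<forall>\<^sub>F n in sequentially. 0 < n"
    by (rule eventually_gt_at_top)
  ultimately show ?thesis
  proof eventually_elim
    case (elim n)
    show ?case
    proof (intro ballI, clarify)
      fix m y assume "(m, y) \<in> B_set (\<kappa> n) n"
      then have "1 \<le> m" "real_of_int m \<le> real n * \<kappa> n" "\<bar>real_of_int y\<bar> \<le> real n * \<kappa> n"
        by (auto simp: B_set_def) linarith+
      then have my: "0 \<le> real_of_int m / real n" "real_of_int m / real n \<le> \<kappa> n" "\<bar>real_of_int y / real n\<bar> \<le> \<kappa> n"
        using elim(3) by (simp_all add: field_simps)
      have "dist (1 - real_of_int m / real n, x n / real n - real_of_int y / real n) (1, \<alpha>0)
          \<le> real_of_int m / real n + \<bar>x n / real n - real_of_int y / real n - \<alpha>0\<bar>"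
        using dist_Pair_le_sum_abs[of "1 - real_of_int m / real n" "x n / real n - real_of_int y / real n" 1 \<alpha>0] my(1)
        by simp
      also have "\<dots> < e"
        using my elim(1,2) by linarith
      finally show "dist (1 - real_of_int m / real n, x n / real n - real_of_int y / real n) (1, \<alpha>0) < e" .
    qed
  qed
qed

lemma Max_dominated_tendsto_0:
  fixes M :: "'a::metric_space \<Rightarrow> 'b::metric_space" and g :: "nat \<Rightarrow> 'a" and h :: "nat \<Rightarrow> 'i \<Rightarrow> 'a"
    and err :: "nat \<Rightarrow> 'i \<Rightarrow> real"
  assumes "\<And>n. finite (B n)" and interior: "u1 \<in> interior U" and cont: "continuous (at u1 within U) M"
    and g: "g \<longlonglongrightarrow> u1" and h: "\<And>e. 0 < e \<Longrightarrow> \<forall>\<^sub>F n in sequentially. \<forall>i\<in>B n. dist (h n i) u1 < e"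
    and err: "\<And>n i. 0 < n \<Longrightarrow> i \<in> B n \<Longrightarrow> g n \<in> U \<Longrightarrow> h n i \<in> U \<Longrightarrow> err n i \<le> 2 * dist (M (h n i)) (M (g n))"
  shows "(\<lambda>n. Max (insert 0 (err n ` B n))) \<longlonglongrightarrow> 0"
proof (rule Max_insert_0_tendsto_0)
  show "finite (err n ` B n)" for n
    using assms(1) by simp
  fix e :: real assume "0 < e"
  obtain r where "0 < r" "ball u1 r \<subseteq> U"
    using interior by (auto simp: mem_interior)
  obtain d where "0 < d" and close: "\<And>w. w \<in> U \<Longrightarrow> dist w u1 < d \<Longrightarrow> dist (M w) (M u1) < e / 4"
    using cont \<open>0 < e\<close> unfolding continuous_within_eps_delta by (metis zero_less_divide_iff zero_less_numeral)
  have near: "w \<in> U" "dist (M w) (M u1) < e / 4" if "dist w u1 < min d r" for w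
    using that \<open>ball u1 r \<subseteq> U\<close> close[of w] by (auto simp: dist_commute)
  have "\<forall>\<^sub>F n in sequentially. dist (g n) u1 < min d r"
    using g \<open>0 < d\<close> \<open>0 < r\<close> by (intro tendstoD) auto
  moreover have "\<forall>\<^sub>F n in sequentially. \<forall>i\<in>B n. dist (h n i) u1 < min d r"
    using \<open>0 < d\<close> \<open>0 < r\<close> by (intro h) simp
  moreover have "\<forall>\<^sub>F n in sequentially. 0 < n"
    by (rule eventually_gt_at_top)
  ultimately show "\<forall>\<^sub>F n in sequentially. \<forall>z\<in>err n ` B n. z \<le> e"
  proof eventually_elim
    fix n assume gn: "dist (g n) u1 < min d r" and hn: "\<forall>i\<in>B n. dist (h n i) u1 < min d r" and "0 < n"
    have "err n i \<le> e" if "i \<in> B n" for i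
    proof -
      have "err n i \<le> 2 * dist (M (h n i)) (M (g n))"
        using err[OF \<open>0 < n\<close> that near(1)[OF gn] near(1)] hn that by blast
      also have "\<dots> \<le> 2 * (dist (M (h n i)) (M u1) + dist (M (g n)) (M u1))"
        using dist_triangle2[of "M (h n i)" "M (g n)" "M u1"] by simp
      also have "\<dots> \<le> e"
        using near(2)[OF gn] near(2) hn that by fastforce
      finally show ?thesis .
    qed
    then show "\<forall>z\<in>err n ` B n. z \<le> e"
      by blast
  qed
qed

lemma support_split_error:
  fixes D :: "real \<Rightarrow> real \<Rightarrow> real" and M :: "real \<times> real \<Rightarrow> real \<times> real" and n m y \<alpha> l \<mu> :: real
  defines "u' \<equiv> (1 - m / n, \<alpha> - y / n)"
    and "d \<equiv> - n * D (1 - m / n) (\<alpha> - y / n) + n * D 1 \<alpha> - l * m - \<mu> * y"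
  assumes D_eq: "\<And>u. u \<in> U \<Longrightarrow> D (fst u) (snd u) = inner (M u) u"
    and D_ge: "\<And>u u'. u \<in> U \<Longrightarrow> u' \<in> U \<Longrightarrow> inner (M u') u \<le> D (fst u) (snd u)"
    and n_pos: "0 < n" and u: "(1, \<alpha>) \<in> U" and u': "u' \<in> U" and M_u: "M (1, \<alpha>) = (l, \<mu>)"
  shows "\<bar>fst (split_coeffs (fst (M u') - l) (snd (M u') - \<mu>) m y d)\<bar>
      + \<bar>snd (split_coeffs (fst (M u') - l) (snd (M u') - \<mu>) m y d)\<bar> \<le> 2 * dist (M u') (M (1, \<alpha>))"
proof -
  have "(1, \<alpha>) - u' = (1 / n) *\<^sub>R (m, y)"
    using \<open>0 < n\<close> by (simp add: u'_def)
  from support_increment_bounds[OF n_pos D_eq[OF u] D_eq[OF u'] D_ge[OF u' u] D_ge[OF u u'] this]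
  have "(fst (M u') - l) * m + (snd (M u') - \<mu>) * y \<le> d" "d \<le> 0"
    using M_u by (simp_all add: d_def u'_def inner_prod_def algebra_simps)
  then have "\<bar>fst (split_coeffs (fst (M u') - l) (snd (M u') - \<mu>) m y d)\<bar>
      + \<bar>snd (split_coeffs (fst (M u') - l) (snd (M u') - \<mu>) m y d)\<bar> \<le> \<bar>fst (M u' - M (1, \<alpha>))\<bar> + \<bar>snd (M u' - M (1, \<alpha>))\<bar>"
    using M_u by (simp add: split_coeffs_bound)
  also have "\<dots> \<le> 2 * dist (M u') (M (1, \<alpha>))"
    unfolding dist_norm by (rule abs_fst_add_abs_snd_le)
  finally show ?thesis .
qed

lemma support_function_expansion:
  fixes D :: "real \<Rightarrow> real \<Rightarrow> real" and M :: "real \<times> real \<Rightarrow> real \<times> real" and U :: "(real \<times> real) set"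
    and lamf muf :: "real \<Rightarrow> real" and x \<kappa> :: "nat \<Rightarrow> real"
  assumes D_eq: "\<And>u. u \<in> U \<Longrightarrow> D (fst u) (snd u) = inner (M u) u"
    and D_ge: "\<And>u u'. u \<in> U \<Longrightarrow> u' \<in> U \<Longrightarrow> inner (M u') u \<le> D (fst u) (snd u)"
    and lam_mu: "\<And>\<alpha>. (1, \<alpha>) \<in> U \<Longrightarrow> M (1, \<alpha>) = (lamf \<alpha>, muf \<alpha>)"
    and interior: "(1, \<alpha>0) \<in> interior U" and cont: "continuous (at (1, \<alpha>0) within U) M"
    and x: "(\<lambda>n. x n / real n) \<longlonglongrightarrow> \<alpha>0" and \<kappa>: "\<kappa> \<longlonglongrightarrow> 0"
  shows "\<exists>\<epsilon> \<theta> :: nat \<Rightarrow> int \<Rightarrow> int \<Rightarrow> real.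
        (\<forall>n m y. (m, y) \<in> B_set (\<kappa> n) n \<longrightarrow>
           - real n * D (1 - real_of_int m / real n) (x n / real n - real_of_int y / real n)
           = - real n * D 1 (x n / real n)
             + (lamf (x n / real n) + \<epsilon> n m y) * real_of_int m
             + (muf (x n / real n) + \<theta> n m y) * real_of_int y)
      \<and> (\<lambda>n. Max (insert 0 {\<bar>\<epsilon> n m y\<bar> + \<bar>\<theta> n m y\<bar> | m y. (m, y) \<in> B_set (\<kappa> n) n})) \<longlonglongrightarrow> 0"
proof -
  define \<alpha> where "\<alpha> n = x n / real n" for n
  define u' where "u' n m y = (1 - real_of_int m / real n, \<alpha> n - real_of_int y / real n)" for n and m y :: int
  define et where "et n m y = split_coeffs (fst (M (u' n m y)) - lamf (\<alpha> n)) (snd (M (u' n m y)) - muf (\<alpha> n))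
      (real_of_int m) (real_of_int y) (- real n * D (1 - real_of_int m / real n) (\<alpha> n - real_of_int y / real n)
        + real n * D 1 (\<alpha> n) - lamf (\<alpha> n) * real_of_int m - muf (\<alpha> n) * real_of_int y)" for n m y
  have "- real n * D (1 - real_of_int m / real n) (x n / real n - real_of_int y / real n)
      = - real n * D 1 (x n / real n) + (lamf (x n / real n) + fst (et n m y)) * real_of_int m
        + (muf (x n / real n) + snd (et n m y)) * real_of_int y"
    if "(m, y) \<in> B_set (\<kappa> n) n" for n m y
  proof -
    have "real_of_int m \<noteq> 0"
      using that by (simp add: B_set_def)
    then have "fst (et n m y) * real_of_int m + snd (et n m y) * real_of_int y
        = - real n * D (1 - real_of_int m / real n) (\<alpha> n - real_of_int y / real n)
          + real n * D 1 (\<alpha> n) - lamf (\<alpha> n) * real_of_int m - muf (\<alpha> n) * real_of_int y"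
      unfolding et_def by (rule split_coeffs_eq)
    then show ?thesis
      by (simp add: \<alpha>_def algebra_simps)
  qed
  moreover have "(\<lambda>n. Max (insert 0 ((\<lambda>(m, y). \<bar>fst (et n m y)\<bar> + \<bar>snd (et n m y)\<bar>) ` B_set (\<kappa> n) n))) \<longlonglongrightarrow> 0"
  proof (rule Max_dominated_tendsto_0[OF finite_B_set interior cont, where g = "\<lambda>n. (1, \<alpha> n)"
        and h = "\<lambda>n (m, y). u' n m y"])
    show "(\<lambda>n. (1, \<alpha> n)) \<longlonglongrightarrow> (1, \<alpha>0)"
      using x unfolding \<alpha>_def by (intro tendsto_intros)
    show "\<forall>\<^sub>F n in sequentially. \<forall>i \<in> B_set (\<kappa> n) n. dist (case i of (m, y) \<Rightarrow> u' n m y) (1, \<alpha>0) < e"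
      if "0 < e" for e
      using B_set_points_converge[OF x \<kappa> that] unfolding u'_def \<alpha>_def
      by (rule eventually_mono) auto
    show "(case i of (m, y) \<Rightarrow> \<bar>fst (et n m y)\<bar> + \<bar>snd (et n m y)\<bar>)
        \<le> 2 * dist (M (case i of (m, y) \<Rightarrow> u' n m y)) (M (1, \<alpha> n))"
      if "0 < n" "i \<in> B_set (\<kappa> n) n" "(1, \<alpha> n) \<in> U" "(case i of (m, y) \<Rightarrow> u' n m y) \<in> U" for n i
      using that support_split_error[OF D_eq D_ge _ that(3) _ lam_mu[OF that(3)]]
      by (auto simp: et_def u'_def split: prod.splits)
  qed
  moreover have "{\<bar>fst (et n m y)\<bar> + \<bar>snd (et n m y)\<bar> | m y. (m, y) \<in> B_set (\<kappa> n) n}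
      = (\<lambda>(m, y). \<bar>fst (et n m y)\<bar> + \<bar>snd (et n m y)\<bar>) ` B_set (\<kappa> n) n" for n
    by force
  ultimately show ?thesis
    by (intro exI[of _ "\<lambda>n m y. fst (et n m y)"] exI[of _ "\<lambda>n m y. snd (et n m y)"] conjI) auto
qed

section \<open>Excursions of the chain\<close>

definition wf_state :: "nat \<Rightarrow> state \<Rightarrow> bool" where
  "wf_state v s \<longleftrightarrow> length (snd s) = v \<and> last (snd s) = True"

fun first_hit :: "nat \<Rightarrow> state \<Rightarrow> bool list \<Rightarrow> bool" where
  "first_hit v s [] = False"
| "first_hit v s (b # bs) = (if ystep v s b = y0 v then bs = [] else first_hit v (ystep v s b) bs)"

lemma yrun_Nil [simp]: "yrun v s [] = s"
  by (simp add: yrun_def)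

lemma yrun_Cons [simp]: "yrun v s (b # bs) = yrun v (ystep v s b) bs"
  by (simp add: yrun_def)

lemma first_hit_iff:
  "first_hit v s bs \<longleftrightarrow> bs \<noteq> [] \<and> yrun v s bs = y0 v \<and>
     (\<forall>i. 0 < i \<and> i < length bs \<longrightarrow> yrun v s (take i bs) \<noteq> y0 v)"
proof (induction bs arbitrary: s)
  case Nil
  then show ?case by simp
next
  case (Cons b bs)
  have "(\<forall>i. 0 < i \<and> i < Suc (length bs) \<longrightarrow> yrun v s (take i (b # bs)) \<noteq> y0 v) \<longleftrightarrow>
      (\<forall>j < length bs. yrun v (ystep v s b) (take j bs) \<noteq> y0 v)"
    by (metis Suc_less_eq gr0_conv_Suc take_Suc_Cons yrun_Cons)
  also have "\<dots> \<longleftrightarrow> (bs \<noteq> [] \<longrightarrow> ystep v s b \<noteq> y0 v) \<and>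
      (\<forall>j. 0 < j \<and> j < length bs \<longrightarrow> yrun v (ystep v s b) (take j bs) \<noteq> y0 v)"
    by (metis gr0I length_greater_0_conv take_0 yrun_Nil)
  finally have shift: "(\<forall>i. 0 < i \<and> i < length (b # bs) \<longrightarrow> yrun v s (take i (b # bs)) \<noteq> y0 v) \<longleftrightarrow>
      (bs \<noteq> [] \<longrightarrow> ystep v s b \<noteq> y0 v) \<and>
      (\<forall>j. 0 < j \<and> j < length bs \<longrightarrow> yrun v (ystep v s b) (take j bs) \<noteq> y0 v)"
    by simp
  show ?case
    unfolding shift using Cons.IH[of "ystep v s b"] by (cases bs) auto
qed

lemma first_return_iff_first_hit: "first_return v bs \<longleftrightarrow> first_hit v (y0 v) bs"
  by (simp add: first_return_def first_hit_iff)

lemma trans_prob_sum: "trans_prob p s True + trans_prob p s False = 1"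
  by (simp add: trans_prob_def)

fun first_hit_prob :: "(nat \<Rightarrow> bool list \<Rightarrow> real) \<Rightarrow> nat \<Rightarrow> nat \<Rightarrow> state \<Rightarrow> real" where
  "first_hit_prob p v 0 s = 0"
| "first_hit_prob p v (Suc n) s = (\<Sum>b\<in>UNIV. trans_prob p s b *
     (if ystep v s b = y0 v then (if n = 0 then 1 else 0) else first_hit_prob p v n (ystep v s b)))"

fun avoid_prob :: "(nat \<Rightarrow> bool list \<Rightarrow> real) \<Rightarrow> nat \<Rightarrow> nat \<Rightarrow> state \<Rightarrow> real" where
  "avoid_prob p v 0 s = 1"
| "avoid_prob p v (Suc n) s = (\<Sum>b\<in>UNIV. trans_prob p s b *
     (if ystep v s b = y0 v then 0 else avoid_prob p v n (ystep v s b)))"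

lemma sum_first_hit_paths:
  "(\<Sum>bs | length bs = n. if first_hit v s bs then path_prob p v s bs else 0) = first_hit_prob p v n s"
proof (induction n arbitrary: s)
  case 0
  have "{bs :: bool list. length bs = 0} = {[]}" by auto
  then show ?case by simp
next
  case (Suc n)
  have step: "(\<Sum>bs | length bs = n. if first_hit v s (b # bs) then path_prob p v s (b # bs) else 0)
      = trans_prob p s b * (if ystep v s b = y0 v then (if n = 0 then 1 else 0) else first_hit_prob p v n (ystep v s b))"
    for b
  proof (cases "ystep v s b = y0 v")
    case True
    have "{bs :: bool list. length bs = n \<and> bs = []} = (if n = 0 then {[]} else {})" by auto
    then show ?thesis
      using True by (simp add: if_distrib[of "\<lambda>x. x * _"] sum.If_cases finite_lists_length_bool)
  next
    case False
    then show ?thesis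
      by (simp add: Suc.IH[symmetric] sum_distrib_left if_distrib[of "\<lambda>x. _ * x"] cong: if_cong)
  qed
  show ?case
    by (simp only: sum_lists_length_Suc sum.distrib step first_hit_prob.simps sum_UNIV_bool)
qed

lemma first_hit_avoid_total: "(\<Sum>k\<le>n. first_hit_prob p v k s) + avoid_prob p v n s = 1"
proof (induction n arbitrary: s)
  case 0
  then show ?case by simp
next
  case (Suc n)
  define R where "R b = (\<Sum>k\<le>n. if ystep v s b = y0 v then (if k = 0 then 1 else 0) else first_hit_prob p v k (ystep v s b))" for b
  define A where "A b = (if ystep v s b = y0 v then 0 else avoid_prob p v n (ystep v s b))" for b
  have RA: "R b + A b = 1" for b
    using Suc.IH[of "ystep v s b"] by (auto simp: R_def A_def)
  have "(\<Sum>k\<le>Suc n. first_hit_prob p v k s) = (\<Sum>k\<le>n. first_hit_prob p v (Suc k) s)"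
    by (simp only: sum.atMost_Suc_shift first_hit_prob.simps(1) add_0_left)
  also have "\<dots> = trans_prob p s True * R True + trans_prob p s False * R False"
    by (simp add: R_def sum_UNIV_bool sum.distrib sum_distrib_left)
  finally have "(\<Sum>k\<le>Suc n. first_hit_prob p v k s) + avoid_prob p v (Suc n) s
      = trans_prob p s True * (R True + A True) + trans_prob p s False * (R False + A False)"
    by (simp add: A_def sum_UNIV_bool algebra_simps)
  then show ?case
    by (simp add: RA trans_prob_sum)
qed

locale excursion_chain =
  fixes v :: nat and p :: "nat \<Rightarrow> bool list \<Rightarrow> real" and \<delta>1 \<delta>2 :: real
  assumes v_pos: "v \<ge> 1" and \<delta>2_pos: "0 < \<delta>2" and \<delta>2_less_\<delta>1: "\<delta>2 < \<delta>1" and \<delta>1_less_1: "\<delta>1 < 1"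
    and p_bounds: "\<And>k w. length w = v \<Longrightarrow> last w = True \<Longrightarrow> \<delta>2 \<le> p k w \<and> p k w \<le> \<delta>1"
begin

lemma wf_state_y0: "wf_state v (y0 v)"
  using v_pos by (simp add: wf_state_def y0_def)

lemma wf_state_ystep: "wf_state v s \<Longrightarrow> wf_state v (ystep v s b)"
  using v_pos by (cases s) (auto simp: wf_state_def ystep_def last_v_def)

lemma trans_prob_True_ge: "wf_state v s \<Longrightarrow> \<delta>2 \<le> trans_prob p s True"
  using p_bounds by (simp add: wf_state_def trans_prob_def)

lemma trans_prob_False_ge: "wf_state v s \<Longrightarrow> 1 - \<delta>1 \<le> trans_prob p s False"
  using p_bounds by (simp add: wf_state_def trans_prob_def)

lemma trans_prob_nonneg: "wf_state v s \<Longrightarrow> 0 \<le> trans_prob p s b"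
  using trans_prob_True_ge[of s] trans_prob_False_ge[of s] \<delta>2_pos \<delta>1_less_1 by (cases b) auto

lemma path_prob_nonneg: "wf_state v s \<Longrightarrow> 0 \<le> path_prob p v s bs"
  by (induction bs arbitrary: s) (simp_all add: wf_state_ystep trans_prob_nonneg)

lemma first_hit_prob_nonneg: "wf_state v s \<Longrightarrow> 0 \<le> first_hit_prob p v n s"
proof (induction n arbitrary: s)
  case (Suc n)
  show ?case
    unfolding first_hit_prob.simps
    by (intro sum_nonneg mult_nonneg_nonneg; simp add: Suc wf_state_ystep trans_prob_nonneg)
qed simp

lemma avoid_prob_nonneg: "wf_state v s \<Longrightarrow> 0 \<le> avoid_prob p v n s"
proof (induction n arbitrary: s)
  case (Suc n)
  show ?case
    unfolding avoid_prob.simps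
    by (intro sum_nonneg mult_nonneg_nonneg; simp add: Suc wf_state_ystep trans_prob_nonneg)
qed simp

lemma first_hit_prob_Suc_add_avoid_prob:
  "first_hit_prob p v (Suc n) s + avoid_prob p v (Suc n) s = avoid_prob p v n s"
  using first_hit_avoid_total[where p=p and v=v and n="Suc n" and s=s]
    first_hit_avoid_total[where p=p and v=v and n=n and s=s]
    sum.atMost_Suc[of "\<lambda>k. first_hit_prob p v k s" n] by linarith

lemma avoid_prob_mono: "m \<le> n \<Longrightarrow> wf_state v s \<Longrightarrow> avoid_prob p v n s \<le> avoid_prob p v m s"
proof (induction n rule: dec_induct)
  case (step k)
  then show ?case
    using first_hit_prob_Suc_add_avoid_prob[of k s] first_hit_prob_nonneg[where n="Suc k"] by fastforce
qed simp

lemma first_hit_prob_Suc_le: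
  assumes "wf_state v s" shows "first_hit_prob p v (Suc n) s \<le> avoid_prob p v n s"
  using first_hit_prob_Suc_add_avoid_prob[of n s] avoid_prob_nonneg[OF assms, where n="Suc n"] by linarith

lemma ystep_True_eq_y0: "v - 1 \<le> k \<Longrightarrow> length w = v \<Longrightarrow> ystep v (k, w) True = y0 v"
  using v_pos by (simp add: ystep_def y0_def last_v_def drop_append)

lemma avoid_prob_Suc_state:
  "avoid_prob p v (Suc m) (k, w) =
     trans_prob p (k, w) True * (if ystep v (k, w) True = y0 v then 0 else avoid_prob p v m (ystep v (k, w) True))
     + trans_prob p (k, w) False * avoid_prob p v m (Suc k, w)"
  by (simp add: sum_UNIV_bool ystep_def y0_def)

text \<open>From \<open>(k, w)\<close> with \<open>v - 1 \<le> k + j\<close>, the path of \<open>j\<close> zeros and a one leads to \<open>y0\<close> and has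
  probability at least \<open>\<delta>2 (1 - \<delta>1)\<^sup>j\<close>; this is where the geometric tail of the excursion
  comes from.\<close>

lemma avoid_prob_contract:
  assumes B: "0 \<le> B" "\<And>s. wf_state v s \<Longrightarrow> avoid_prob p v n s \<le> B"
  shows "wf_state v (k, w) \<Longrightarrow> v - 1 \<le> k + j \<Longrightarrow>
    avoid_prob p v (n + j + 1) (k, w) \<le> B * (1 - \<delta>2 * (1 - \<delta>1) ^ j)"
proof (induction j arbitrary: k)
  case 0
  have "ystep v (k, w) True = y0 v"
    using 0 by (intro ystep_True_eq_y0) (auto simp: wf_state_def)
  moreover have "trans_prob p (k, w) False \<le> 1 - \<delta>2"
    using trans_prob_True_ge[OF 0(1)] trans_prob_sum[of p "(k, w)"] by linarith
  moreover have "avoid_prob p v n (Suc k, w) \<le> B" "0 \<le> avoid_prob p v n (Suc k, w)"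
    using B 0 avoid_prob_nonneg by (auto simp: wf_state_def)
  ultimately have "avoid_prob p v (Suc n) (k, w) \<le> (1 - \<delta>2) * B"
    using B(1) \<delta>2_less_\<delta>1 \<delta>1_less_1 unfolding avoid_prob_Suc_state by (simp add: mult_mono)
  then show ?case
    by (simp add: mult.commute)
next
  case (Suc j)
  define T where "T = trans_prob p (k, w) True"
  define F where "F = trans_prob p (k, w) False"
  define X where "X = (if ystep v (k, w) True = y0 v then 0 else avoid_prob p v (n + j + 1) (ystep v (k, w) True))"
  have TF: "T + F = 1" "0 \<le> T" "1 - \<delta>1 \<le> F"
    using trans_prob_sum trans_prob_nonneg[OF Suc.prems(1)] trans_prob_False_ge[OF Suc.prems(1)]
    by (auto simp: T_def F_def)
  have "avoid_prob p v (n + j + 1) (ystep v (k, w) True) \<le> B"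
    using avoid_prob_mono[of n "n + j + 1"] B(2) wf_state_ystep[OF Suc.prems(1)] by (meson le_add1 order_trans)
  then have "X \<le> B"
    using B(1) by (simp add: X_def)
  moreover have "avoid_prob p v (n + j + 1) (Suc k, w) \<le> B * (1 - \<delta>2 * (1 - \<delta>1) ^ j)"
    using Suc.IH[of "Suc k"] Suc.prems by (simp add: wf_state_def)
  ultimately have "avoid_prob p v (Suc (n + j + 1)) (k, w) \<le> T * B + F * (B * (1 - \<delta>2 * (1 - \<delta>1) ^ j))"
    using TF \<delta>1_less_1 unfolding T_def F_def X_def avoid_prob_Suc_state
    by (intro add_mono mult_left_mono) auto
  also have "\<dots> = B * (T + F) - F * (B * \<delta>2 * (1 - \<delta>1) ^ j)"
    by (simp add: algebra_simps)
  also have "\<dots> = B - F * (B * \<delta>2 * (1 - \<delta>1) ^ j)"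
    using TF(1) by simp
  also have "\<dots> \<le> B - (1 - \<delta>1) * (B * \<delta>2 * (1 - \<delta>1) ^ j)"
    using TF B(1) \<delta>2_pos \<delta>1_less_1 by (intro diff_left_mono mult_right_mono) auto
  finally show ?case
    by (simp add: algebra_simps del: avoid_prob.simps)
qed

definition q_hit :: real where
  "q_hit = \<delta>2 * (1 - \<delta>1) ^ (v - 1)"

lemma q_hit_pos: "0 < q_hit" and q_hit_less_1: "q_hit < 1"
  using \<delta>2_pos \<delta>2_less_\<delta>1 \<delta>1_less_1 power_le_one[of "1 - \<delta>1" "v - 1"]
  by (auto simp: q_hit_def intro: le_less_trans[OF mult_left_le])

lemma avoid_prob_geometric:
  assumes "wf_state v s"
  shows "avoid_prob p v n s \<le> (1 - q_hit) ^ (n div v)"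
proof -
  have geo: "avoid_prob p v (j * v) s \<le> (1 - q_hit) ^ j" if "wf_state v s" for j s
    using that
  proof (induction j arbitrary: s)
    case (Suc j)
    then show ?case
      using avoid_prob_contract[of "(1 - q_hit) ^ j" "j * v" "fst s" "snd s" "v - 1"] v_pos q_hit_less_1
      by (cases s) (simp add: add.commute mult.commute q_hit_def)
  qed simp
  have "avoid_prob p v n s \<le> avoid_prob p v (n div v * v) s"
    using assms by (intro avoid_prob_mono) simp
  then show ?thesis
    using geo[OF assms, of "n div v"] by linarith
qed

lemma first_hit_prob_y0_geometric:
  "\<exists>K \<rho>. 0 < \<rho> \<and> \<rho> < 1 \<and> (\<forall>n. first_hit_prob p v n (y0 v) \<le> K * \<rho> ^ n)"
proof -
  define \<rho> where "\<rho> = root v (1 - q_hit)"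
  have \<rho>: "0 < \<rho>" "\<rho> < 1" "\<rho> ^ v = 1 - q_hit"
    using v_pos q_hit_pos q_hit_less_1 by (auto simp: \<rho>_def real_root_pow_pos2)
  have "first_hit_prob p v n (y0 v) \<le> 1 / \<rho> ^ Suc v * \<rho> ^ n" for n
  proof (cases n)
    case 0
    then show ?thesis using \<rho> q_hit_less_1 by simp
  next
    case (Suc m)
    have "m \<le> v + v * (m div v)"
    proof -
      have "m mod v < v" "v * (m div v) + m mod v = m"
        using v_pos by (simp_all add: mult.commute)
      then show ?thesis by linarith
    qed
    then have "\<rho> ^ v * \<rho> ^ (v * (m div v)) \<le> \<rho> ^ m"
      unfolding power_add[symmetric] using \<rho> by (intro power_decreasing) auto
    moreover have "first_hit_prob p v n (y0 v) \<le> \<rho> ^ (v * (m div v))"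
      using first_hit_prob_Suc_le[OF wf_state_y0, of m] avoid_prob_geometric[OF wf_state_y0, of m] \<rho>(3)
      by (simp add: Suc power_mult)
    ultimately have "\<rho> ^ v * first_hit_prob p v n (y0 v) \<le> \<rho> ^ m"
      using \<rho>(1) by (meson mult_left_mono order_trans zero_le_power less_imp_le)
    then show ?thesis
      using \<rho>(1) by (simp add: Suc field_simps del: first_hit_prob.simps)
  qed
  then show ?thesis
    using \<rho> by blast
qed

lemma first_hit_prob_y0_sums: "(\<lambda>n. first_hit_prob p v n (y0 v)) sums 1"
proof -
  have "(\<lambda>n. (1 - q_hit) ^ (n div v)) \<longlonglongrightarrow> 0"
    using q_hit_pos q_hit_less_1 v_pos
    by (intro filterlim_compose[OF LIMSEQ_power_zero filterlim_at_top_div_const_nat]) auto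
  then have "(\<lambda>n. avoid_prob p v n (y0 v)) \<longlonglongrightarrow> 0"
    by (rule tendsto_sandwich[rotated 2, OF tendsto_const])
      (simp_all add: avoid_prob_geometric[OF wf_state_y0] avoid_prob_nonneg[OF wf_state_y0])
  then have "(\<lambda>n. 1 - avoid_prob p v n (y0 v)) \<longlonglongrightarrow> 1"
    using tendsto_diff[of "\<lambda>_. 1" 1] by fastforce
  moreover have "(\<Sum>k\<le>n. first_hit_prob p v k (y0 v)) = 1 - avoid_prob p v n (y0 v)" for n
    using first_hit_avoid_total[where s="y0 v"] by (simp add: eq_diff_eq)
  ultimately show ?thesis
    unfolding sums_def_le by simp
qed

definition excursion_weight :: "bool list \<Rightarrow> real" where
  "excursion_weight bs = (if first_return v bs then path_prob p v (y0 v) bs else 0)"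

text \<open>\<open>excursion_sum n g\<close> is \<open>E [g \<zeta>; \<tau> = n]\<close>.\<close>

definition excursion_sum :: "nat \<Rightarrow> (nat \<Rightarrow> real) \<Rightarrow> real" where
  "excursion_sum n g = (\<Sum>bs | length bs = n. excursion_weight bs * g (zeta_of bs))"

lemma excursion_weight_nonneg: "0 \<le> excursion_weight bs"
  by (simp add: excursion_weight_def path_prob_nonneg[OF wf_state_y0])

lemma excursion_sum_nonneg: "(\<And>z. 0 \<le> g z) \<Longrightarrow> 0 \<le> excursion_sum n g"
  unfolding excursion_sum_def by (intro sum_nonneg mult_nonneg_nonneg excursion_weight_nonneg) auto

lemma excursion_sum_mono:
  "(\<And>z. z \<le> n \<Longrightarrow> h z \<le> g z) \<Longrightarrow> excursion_sum n h \<le> excursion_sum n g"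
  unfolding excursion_sum_def zeta_of_def
  by (intro sum_mono mult_left_mono excursion_weight_nonneg) (auto simp: count_le_length)

lemma excursion_sum_strict_mono:
  assumes "\<And>z. h z \<le> g z" "0 < excursion_weight bs" "h (zeta_of bs) < g (zeta_of bs)"
  shows "excursion_sum (length bs) h < excursion_sum (length bs) g"
  unfolding excursion_sum_def using assms
  by (intro sum_strict_mono_ex1 finite_lists_length_bool)
    (auto intro!: mult_left_mono excursion_weight_nonneg bexI[of _ bs])

lemma excursion_sum_add: "excursion_sum n (\<lambda>z. g z + h z) = excursion_sum n g + excursion_sum n h"
  unfolding excursion_sum_def by (simp add: distrib_left sum.distrib)

lemma excursion_sum_cmult: "excursion_sum n (\<lambda>z. c * g z) = c * excursion_sum n g"
  unfolding excursion_sum_def by (simp add: sum_distrib_left algebra_simps)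

lemma excursion_sum_one: "excursion_sum n (\<lambda>_. 1) = first_hit_prob p v n (y0 v)"
  unfolding excursion_sum_def excursion_weight_def first_return_iff_first_hit
  by (simp add: sum_first_hit_paths[symmetric] cong: if_cong)

lemma excursion_E_eq_suminf:
  assumes "\<And>t z. 0 \<le> f t z"
  shows "excursion_E p v f = (\<Sum>n. ennreal (excursion_sum n (f n)))"
proof -
  define F where "F bs = ennreal (excursion_weight bs * f (length bs) (zeta_of bs))" for bs
  have "excursion_E p v f = (\<integral>\<^sup>+ bs. F bs \<partial>count_space UNIV)"
    unfolding excursion_E_def F_def excursion_weight_def tau_of_def by (intro nn_integral_cong) simp
  also have "\<dots> = (\<integral>\<^sup>+ bs. (\<Sum>n. if n = length bs then F bs else 0) \<partial>count_space UNIV)"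
    by (intro nn_integral_cong sums_unique sums_single)
  also have "\<dots> = (\<Sum>n. \<integral>\<^sup>+ bs. (if n = length bs then F bs else 0) \<partial>count_space UNIV)"
    by (rule nn_integral_suminf) simp
  also have "\<dots> = (\<Sum>n. ennreal (excursion_sum n (f n)))"
  proof (rule suminf_cong)
    fix n
    have "(\<integral>\<^sup>+ bs. (if n = length bs then F bs else 0) \<partial>count_space UNIV) = (\<Sum>bs | length bs = n. F bs)"
      by (subst nn_integral_count_space'[where A="{bs. length bs = n}"])
        (auto simp: finite_lists_length_bool intro!: sum.cong)
    also have "\<dots> = ennreal (excursion_sum n (f n))"
      unfolding excursion_sum_def F_def using excursion_weight_nonneg assms
      by (subst sum_ennreal) (auto intro: sum.cong)
    finally show "(\<integral>\<^sup>+ bs. (if n = length bs then F bs else 0) \<partial>count_space UNIV) = ennreal (excursion_sum n (f n))" .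
  qed
  finally show ?thesis .
qed

lemma first_hit_zeros_one:
  "length w = v \<Longrightarrow> v - 1 \<le> k + j \<Longrightarrow> first_hit v (k, w) (replicate j False @ [True])"
proof (induction j arbitrary: k)
  case 0
  then show ?case by (simp add: ystep_True_eq_y0)
next
  case (Suc j)
  then show ?case by (simp add: ystep_def y0_def)
qed

lemma path_prob_zeros_one_pos:
  "wf_state v (k, w) \<Longrightarrow> 0 < path_prob p v (k, w) (replicate j False @ [True])"
proof (induction j arbitrary: k)
  case 0
  then show ?case using trans_prob_True_ge \<delta>2_pos by (fastforce intro: less_le_trans)
next
  case (Suc j)
  have "0 < trans_prob p (k, w) False"
    using trans_prob_False_ge[OF Suc.prems] \<delta>1_less_1 by linarith
  moreover have "wf_state v (Suc k, w)"
    using Suc.prems by (simp add: wf_state_def)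
  ultimately show ?case
    using Suc.IH by (simp add: ystep_def)
qed

lemma excursion_weight_zeros_one_pos:
  assumes "v - 1 \<le> j"
  shows "0 < excursion_weight (replicate j False @ [True])"
proof -
  have "y0 v = (0, replicate (v - 1) False @ [True])" and "length (snd (y0 v)) = v"
    using v_pos by (simp_all add: y0_def)
  then show ?thesis
    using first_hit_zeros_one[of "snd (y0 v)" 0 j] path_prob_zeros_one_pos[of 0 "snd (y0 v)" j]
      wf_state_y0 assms
    by (simp add: excursion_weight_def first_return_iff_first_hit)
qed

lemma zeta_of_zeros_one: "zeta_of (replicate j False @ [True]) = 1"
  by (induction j) (simp_all add: zeta_of_def)

lemma excursion_nondegenerate:
  assumes "c \<noteq> 0"
  shows "\<exists>bs. 0 < excursion_weight bs \<and> inner c (real (length bs), real (zeta_of bs)) \<noteq> 0"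
proof (rule ccontr)
  assume "\<not> ?thesis"
  then have "inner c (real (length (replicate j False @ [True])), 1) = 0" if "v - 1 \<le> j" for j
    using excursion_weight_zeros_one_pos[OF that] by (auto simp: zeta_of_zeros_one)
  from this[of "v - 1"] this[of v] have "fst c * real v + snd c = 0" "fst c * real (Suc v) + snd c = 0"
    using v_pos by (simp_all add: inner_prod_def)
  then have "c = 0"
    by (simp add: prod_eq_iff algebra_simps)
  then show False
    using assms by simp
qed

definition moment_radius :: real where
  "moment_radius = (SOME R. 0 < R \<and> summable (\<lambda>n. first_hit_prob p v n (y0 v) * exp (R * real n)))"

lemma moment_radius_pos: "0 < moment_radius"
  and summable_first_hit_prob_exp: "summable (\<lambda>n. first_hit_prob p v n (y0 v) * exp (moment_radius * real n))"
proof -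
  obtain K \<rho> where \<rho>: "0 < \<rho>" "\<rho> < 1" and bound: "\<And>n. first_hit_prob p v n (y0 v) \<le> K * \<rho> ^ n"
    using first_hit_prob_y0_geometric by blast
  have "\<exists>R>0. summable (\<lambda>n. first_hit_prob p v n (y0 v) * exp (R * real n))"
    by (rule summable_exp_moment_if_geometric[OF \<rho> first_hit_prob_nonneg[OF wf_state_y0] bound])
  then have "0 < moment_radius \<and> summable (\<lambda>n. first_hit_prob p v n (y0 v) * exp (moment_radius * real n))"
    unfolding moment_radius_def by (rule someI_ex)
  then show "0 < moment_radius" "summable (\<lambda>n. first_hit_prob p v n (y0 v) * exp (moment_radius * real n))"
    by simp_all
qed

definition mgf_term :: "nat \<Rightarrow> real \<times> real \<Rightarrow> real" where
  "mgf_term n c = excursion_sum n (\<lambda>z. exp (inner c (real n, real z)))"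

definition mgf :: "real \<times> real \<Rightarrow> real" where
  "mgf c = (\<Sum>n. mgf_term n c)"

definition tau_mean :: real where
  "tau_mean = (\<Sum>n. excursion_sum n (\<lambda>_. real n))"

definition zeta_mean :: real where
  "zeta_mean = (\<Sum>n. excursion_sum n real)"

lemma mgf_term_nonneg: "0 \<le> mgf_term n c"
  unfolding mgf_term_def by (rule excursion_sum_nonneg) simp

lemma mgf_term_le:
  assumes "\<bar>fst c\<bar> + \<bar>snd c\<bar> \<le> R"
  shows "mgf_term n c \<le> first_hit_prob p v n (y0 v) * exp (R * real n)"
proof -
  have "mgf_term n c \<le> excursion_sum n (\<lambda>_. exp (R * real n) * 1)"
    unfolding mgf_term_def
  proof (rule excursion_sum_mono)
    fix z assume "z \<le> n"
    have "fst c * real n \<le> \<bar>fst c\<bar> * real n"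
      by (simp add: mult_right_mono)
    moreover have "snd c * real z \<le> \<bar>snd c\<bar> * real n"
      using \<open>z \<le> n\<close> by (metis abs_ge_self abs_ge_zero mult_mono of_nat_0_le_iff of_nat_mono)
    ultimately have "fst c * real n + snd c * real z \<le> (\<bar>fst c\<bar> + \<bar>snd c\<bar>) * real n"
      by (simp add: distrib_right)
    also have "\<dots> \<le> R * real n"
      using assms by (simp add: mult_right_mono)
    finally show "exp (inner c (real n, real z)) \<le> exp (R * real n) * 1"
      by (simp add: inner_prod_def)
  qed
  also have "\<dots> = first_hit_prob p v n (y0 v) * exp (R * real n)"
    using excursion_sum_cmult[of n "exp (R * real n)" "\<lambda>_. 1"] by (simp add: excursion_sum_one)
  finally show ?thesis .
qed

lemma summable_mgf_term:
  "\<bar>fst c\<bar> + \<bar>snd c\<bar> \<le> moment_radius \<Longrightarrow> summable (\<lambda>n. mgf_term n c)"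
  by (rule summable_comparison_test'[OF summable_first_hit_prob_exp]) (simp add: mgf_term_nonneg mgf_term_le)

lemma summable_mgf_term_ball: "c \<in> ball 0 (moment_radius / 2) \<Longrightarrow> summable (\<lambda>n. mgf_term n c)"
  using norm_fst_le[of "fst c" "snd c"] norm_snd_le[of "snd c" "fst c"]
  by (intro summable_mgf_term) auto

lemma summable_tau_mean: "summable (\<lambda>n. excursion_sum n (\<lambda>_. real n))"
proof (rule summable_comparison_test')
  show "summable (\<lambda>n. first_hit_prob p v n (y0 v) * exp (moment_radius * real n) / moment_radius)"
    by (intro summable_divide summable_first_hit_prob_exp)
  fix n
  have "real n \<le> exp (moment_radius * real n) / moment_radius"
    using exp_gt_self[of "moment_radius * real n"] moment_radius_pos by (simp add: field_simps)
  then have "first_hit_prob p v n (y0 v) * real n \<le> first_hit_prob p v n (y0 v) * (exp (moment_radius * real n) / moment_radius)"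
    using first_hit_prob_nonneg[OF wf_state_y0] by (rule mult_left_mono)
  then show "norm (excursion_sum n (\<lambda>_. real n)) \<le> first_hit_prob p v n (y0 v) * exp (moment_radius * real n) / moment_radius"
    using excursion_sum_cmult[of n "real n" "\<lambda>_. 1"] first_hit_prob_nonneg[OF wf_state_y0, of n]
    by (simp add: excursion_sum_one mult.commute)
qed

lemma summable_zeta_mean: "summable (\<lambda>n. excursion_sum n real)"
  by (rule summable_comparison_test'[OF summable_tau_mean])
    (simp add: excursion_sum_nonneg excursion_sum_mono)

lemma tau_mean_pos: "0 < tau_mean"
proof -
  have "0 < excursion_sum v (\<lambda>_. real v)"
    using excursion_sum_strict_mono[of "\<lambda>_. 0" "\<lambda>_. real v", OF _ excursion_weight_zeros_one_pos[of "v - 1"]] v_pos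
    by (simp add: excursion_sum_def)
  then show ?thesis
    unfolding tau_mean_def using summable_tau_mean excursion_sum_nonneg by (subst suminf_pos_iff) auto
qed

lemma mgf_term_zero: "mgf_term n 0 = first_hit_prob p v n (y0 v)"
  by (simp add: mgf_term_def excursion_sum_one)

lemma mgf_zero: "mgf 0 = 1" and summable_mgf_term_zero: "summable (\<lambda>n. mgf_term n 0)"
  using first_hit_prob_y0_sums by (simp_all add: mgf_def mgf_term_zero sums_iff)

lemma mgf_pos:
  assumes "summable (\<lambda>n. mgf_term n c)"
  shows "0 < mgf c"
proof -
  let ?bs = "replicate (v - 1) False @ [True]"
  have "0 < mgf_term (length ?bs) c"
    using excursion_sum_strict_mono[of "\<lambda>_. 0" "\<lambda>z. exp (inner c (real (length ?bs), real z))",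
        OF _ excursion_weight_zeros_one_pos[of "v - 1"]]
    by (simp add: mgf_term_def excursion_sum_def)
  then show ?thesis
    unfolding mgf_def using assms mgf_term_nonneg by (subst suminf_pos_iff) auto
qed

lemma mgf_term_convex:
  assumes "0 \<le> t" "t \<le> 1"
  shows "mgf_term n ((1 - t) *\<^sub>R c1 + t *\<^sub>R c2) \<le> (1 - t) * mgf_term n c1 + t * mgf_term n c2"
proof -
  have "mgf_term n ((1 - t) *\<^sub>R c1 + t *\<^sub>R c2)
      \<le> excursion_sum n (\<lambda>z. (1 - t) * exp (inner c1 (real n, real z)) + t * exp (inner c2 (real n, real z)))"
    unfolding mgf_term_def using convex_onD[OF exp_convex, of t] assms
    by (intro excursion_sum_mono) (simp add: inner_add_left)
  then show ?thesis
    by (simp add: mgf_term_def excursion_sum_add excursion_sum_cmult)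
qed

lemma mgf_term_strict_convex:
  assumes "0 < t" "t < 1" "c1 \<noteq> c2"
  shows "\<exists>n. mgf_term n ((1 - t) *\<^sub>R c1 + t *\<^sub>R c2) < (1 - t) * mgf_term n c1 + t * mgf_term n c2"
proof -
  obtain bs where bs: "0 < excursion_weight bs" "inner (c1 - c2) (real (length bs), real (zeta_of bs)) \<noteq> 0"
    using excursion_nondegenerate[of "c1 - c2"] assms by auto
  let ?n = "length bs"
  have "mgf_term ?n ((1 - t) *\<^sub>R c1 + t *\<^sub>R c2)
      < excursion_sum ?n (\<lambda>z. (1 - t) * exp (inner c1 (real ?n, real z)) + t * exp (inner c2 (real ?n, real z)))"
    unfolding mgf_term_def
  proof (rule excursion_sum_strict_mono[OF _ bs(1)])
    fix z
    show "exp (inner ((1 - t) *\<^sub>R c1 + t *\<^sub>R c2) (real ?n, real z))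
        \<le> (1 - t) * exp (inner c1 (real ?n, real z)) + t * exp (inner c2 (real ?n, real z))"
      using convex_onD[OF exp_convex, of t] assms by (simp add: inner_add_left)
    show "exp (inner ((1 - t) *\<^sub>R c1 + t *\<^sub>R c2) (real ?n, real (zeta_of bs)))
        < (1 - t) * exp (inner c1 (real ?n, real (zeta_of bs))) + t * exp (inner c2 (real ?n, real (zeta_of bs)))"
      using exp_strict_convex[OF assms(1,2)] bs(2) by (simp add: inner_add_left inner_diff_left)
  qed
  then show ?thesis
    by (auto simp: mgf_term_def excursion_sum_add excursion_sum_cmult)
qed

lemma mgf_convex:
  assumes "summable (\<lambda>n. mgf_term n c1)" "summable (\<lambda>n. mgf_term n c2)" "0 \<le> t" "t \<le> 1"
  shows "summable (\<lambda>n. mgf_term n ((1 - t) *\<^sub>R c1 + t *\<^sub>R c2))"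
    and "mgf ((1 - t) *\<^sub>R c1 + t *\<^sub>R c2) \<le> (1 - t) * mgf c1 + t * mgf c2"
proof -
  have sum: "(\<lambda>n. (1 - t) * mgf_term n c1 + t * mgf_term n c2) sums ((1 - t) * mgf c1 + t * mgf c2)"
    unfolding mgf_def using assms by (intro sums_add sums_mult summable_sums)
  show "summable (\<lambda>n. mgf_term n ((1 - t) *\<^sub>R c1 + t *\<^sub>R c2))"
    using sum mgf_term_convex assms mgf_term_nonneg
    by (intro summable_comparison_test'[OF sums_summable[OF sum]]) auto
  then have "mgf ((1 - t) *\<^sub>R c1 + t *\<^sub>R c2) \<le> (\<Sum>n. (1 - t) * mgf_term n c1 + t * mgf_term n c2)"
    unfolding mgf_def using sums_summable[OF sum] assms by (intro suminf_le mgf_term_convex)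
  then show "mgf ((1 - t) *\<^sub>R c1 + t *\<^sub>R c2) \<le> (1 - t) * mgf c1 + t * mgf c2"
    using sum by (simp add: sums_iff)
qed

lemma mgf_strict_convex:
  assumes "summable (\<lambda>n. mgf_term n c1)" "summable (\<lambda>n. mgf_term n c2)" "0 < t" "t < 1" "c1 \<noteq> c2"
  shows "mgf ((1 - t) *\<^sub>R c1 + t *\<^sub>R c2) < (1 - t) * mgf c1 + t * mgf c2"
proof -
  have sum: "(\<lambda>n. (1 - t) * mgf_term n c1 + t * mgf_term n c2) sums ((1 - t) * mgf c1 + t * mgf c2)"
    unfolding mgf_def using assms by (intro sums_add sums_mult summable_sums)
  obtain m where "mgf_term m ((1 - t) *\<^sub>R c1 + t *\<^sub>R c2) < (1 - t) * mgf_term m c1 + t * mgf_term m c2"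
    using mgf_term_strict_convex assms by blast
  then have "mgf ((1 - t) *\<^sub>R c1 + t *\<^sub>R c2) < (\<Sum>n. (1 - t) * mgf_term n c1 + t * mgf_term n c2)"
    unfolding mgf_def using sums_summable[OF sum] mgf_convex(1)[OF assms(1,2)] assms
    by (intro suminf_strict_mono mgf_term_convex) auto
  then show ?thesis
    using sum by (simp add: sums_iff)
qed

lemma mgf_ge_linear:
  assumes "summable (\<lambda>n. mgf_term n c)"
  shows "1 + inner c (tau_mean, zeta_mean) \<le> mgf c"
    and "c \<noteq> 0 \<Longrightarrow> 1 + inner c (tau_mean, zeta_mean) < mgf c"
proof -
  define L where "L n = excursion_sum n (\<lambda>z. 1 + inner c (real n, real z))" for n
  have "L n = excursion_sum n (\<lambda>_. 1) + (fst c * excursion_sum n (\<lambda>_. real n) + snd c * excursion_sum n real)" for n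
    unfolding L_def excursion_sum_cmult[symmetric] excursion_sum_add[symmetric] by (simp add: inner_prod_def)
  then have "L = (\<lambda>n. first_hit_prob p v n (y0 v) + (fst c * excursion_sum n (\<lambda>_. real n) + snd c * excursion_sum n real))"
    by (simp add: excursion_sum_one fun_eq_iff)
  moreover have "inner c (tau_mean, zeta_mean) = fst c * tau_mean + snd c * zeta_mean"
    by (simp add: inner_prod_def)
  ultimately have L_sums: "L sums (1 + inner c (tau_mean, zeta_mean))"
    unfolding tau_mean_def zeta_mean_def
    using sums_add[OF first_hit_prob_y0_sums sums_add[OF sums_mult[OF summable_sums[OF summable_tau_mean]]
        sums_mult[OF summable_sums[OF summable_zeta_mean]]]]
    by simp
  have L_le: "L n \<le> mgf_term n c" for n
    unfolding L_def mgf_term_def by (intro excursion_sum_mono exp_ge_add_one_self)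
  show "1 + inner c (tau_mean, zeta_mean) \<le> mgf c"
    unfolding mgf_def sums_unique[OF L_sums] using L_le sums_summable[OF L_sums] assms by (rule suminf_le)
  assume "c \<noteq> 0"
  then obtain bs where bs: "0 < excursion_weight bs" "inner c (real (length bs), real (zeta_of bs)) \<noteq> 0"
    using excursion_nondegenerate by blast
  have "L (length bs) < mgf_term (length bs) c"
    unfolding L_def mgf_term_def
    by (rule excursion_sum_strict_mono[OF _ bs(1)]) (simp_all add: add_one_less_exp[OF bs(2)])
  then show "1 + inner c (tau_mean, zeta_mean) < mgf c"
    unfolding mgf_def sums_unique[OF L_sums] by (rule suminf_strict_mono[OF L_le _ sums_summable[OF L_sums] assms])
qed

lemma excursion_E_eq_ennreal:
  assumes "\<And>t z. 0 \<le> f t z" "summable (\<lambda>n. excursion_sum n (f n))"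
  shows "excursion_E p v f = ennreal (\<Sum>n. excursion_sum n (f n))"
  unfolding excursion_E_eq_suminf[OF assms(1)]
  by (rule suminf_ennreal2[OF excursion_sum_nonneg assms(2)]) (rule assms(1))

lemma a_param_eq: "a_param p v = zeta_mean / tau_mean"
proof -
  have "excursion_E p v (\<lambda>t z. real z) = ennreal zeta_mean"
    unfolding zeta_mean_def by (rule excursion_E_eq_ennreal) (simp_all add: summable_zeta_mean)
  moreover have "excursion_E p v (\<lambda>t z. real t) = ennreal tau_mean"
    unfolding tau_mean_def by (rule excursion_E_eq_ennreal) (simp_all add: summable_tau_mean)
  moreover have "0 \<le> zeta_mean"
    unfolding zeta_mean_def by (intro suminf_nonneg summable_zeta_mean excursion_sum_nonneg) simp
  ultimately show ?thesis
    unfolding a_param_def using tau_mean_pos by simp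
qed

lemma A_fun_eq:
  "A_fun p v l m = (if summable (\<lambda>n. mgf_term n (l, m)) then ereal (ln (mgf (l, m))) else \<infinity>)"
proof -
  have E: "excursion_E p v (\<lambda>t z. exp (l * real t + m * real z)) = (\<Sum>n. ennreal (mgf_term n (l, m)))"
    unfolding mgf_term_def by (subst excursion_E_eq_suminf) (simp_all add: inner_prod_def)
  show ?thesis
  proof (cases "summable (\<lambda>n. mgf_term n (l, m))")
    case True
    then have "excursion_E p v (\<lambda>t z. exp (l * real t + m * real z)) = ennreal (mgf (l, m))"
      unfolding E mgf_def by (rule suminf_ennreal2[OF mgf_term_nonneg])
    then show ?thesis
      unfolding A_fun_def using mgf_pos[OF True] True by simp
  next
    case False
    then have "excursion_E p v (\<lambda>t z. exp (l * real t + m * real z)) = \<infinity>"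
      unfolding E infinity_ennreal_def using summable_suminf_not_top[of "\<lambda>n. mgf_term n (l, m)"] mgf_term_nonneg
      by blast
    then show ?thesis
      unfolding A_fun_def using False by simp
  qed
qed

definition mgf_sublevel :: "(real \<times> real) set" where
  "mgf_sublevel = {c. summable (\<lambda>n. mgf_term n c) \<and> mgf c \<le> 1}"

lemma A_fun_le_0_iff: "A_fun p v l m \<le> 0 \<longleftrightarrow> (l, m) \<in> mgf_sublevel"
  using mgf_pos[of "(l, m)"] by (simp add: A_fun_eq mgf_sublevel_def)

lemma A_fun_eq_0_iff: "A_fun p v l m = 0 \<longleftrightarrow> (l, m) \<in> mgf_sublevel \<and> mgf (l, m) = 1"
  using mgf_pos[of "(l, m)"] by (auto simp: A_fun_eq mgf_sublevel_def)

lemma mgf_sublevel_convex: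
  "c1 \<in> mgf_sublevel \<Longrightarrow> c2 \<in> mgf_sublevel \<Longrightarrow> 0 \<le> t \<Longrightarrow> t \<le> 1 \<Longrightarrow> (1 - t) *\<^sub>R c1 + t *\<^sub>R c2 \<in> mgf_sublevel"
  unfolding mgf_sublevel_def using mgf_convex[of c1 c2 t] convex_bound_le[of "mgf c1" 1 "mgf c2" "1 - t" t]
  by auto

sublocale sublevel: strictly_convex_sublevel mgf mgf_sublevel "moment_radius / 2" "(1, a_param p v)"
proof
  show "convex mgf_sublevel"
  proof (rule convexI)
    fix c1 c2 and s t :: real
    assume "c1 \<in> mgf_sublevel" "c2 \<in> mgf_sublevel" "0 \<le> s" "0 \<le> t" "s + t = 1"
    then show "s *\<^sub>R c1 + t *\<^sub>R c2 \<in> mgf_sublevel"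
      using mgf_sublevel_convex[of c1 c2 t] by (simp add: eq_diff_eq[symmetric])
  qed
  show "0 < moment_radius / 2"
    using moment_radius_pos by simp
  show "continuous_on (ball 0 (moment_radius / 2)) mgf"
    using mgf_convex(2)[OF summable_mgf_term_ball summable_mgf_term_ball]
    by (intro convex_on_continuous convex_onI) auto
  show "c \<in> mgf_sublevel \<longleftrightarrow> mgf c \<le> 1" if "c \<in> ball 0 (moment_radius / 2)" for c
    using summable_mgf_term_ball[OF that] by (simp add: mgf_sublevel_def)
  show "mgf ((1 - t) *\<^sub>R c1 + t *\<^sub>R c2) < 1"
    if "c1 \<in> mgf_sublevel" "c2 \<in> mgf_sublevel" "c1 \<noteq> c2" "0 < t" "t < 1" for c1 c2 t
    using that mgf_strict_convex[of c1 c2 t] convex_bound_le[of "mgf c1" 1 "mgf c2" "1 - t" t]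
    by (auto simp: mgf_sublevel_def)
  show "0 \<in> mgf_sublevel"
    by (simp add: mgf_sublevel_def mgf_zero summable_mgf_term_zero)
  show "inner c (1, a_param p v) < 0" if "c \<in> mgf_sublevel" "c \<noteq> 0" for c
  proof -
    have "inner c (tau_mean, zeta_mean) < 0"
      using mgf_ge_linear(2)[of c] that by (auto simp: mgf_sublevel_def)
    moreover have "inner c (tau_mean, zeta_mean) = tau_mean * inner c (1, a_param p v)"
      using tau_mean_pos by (simp add: a_param_eq inner_prod_def field_simps)
    ultimately show ?thesis
      using tau_mean_pos by (simp add: mult_less_0_iff)
  qed
  show "(1 :: real, a_param p v) \<noteq> 0"
    by (simp add: prod_eq_iff)
qed

lemma D_fun_eq_inner:
  assumes "sublevel.localizing u"
  shows "D_fun p v (fst u) (snd u) = inner (sublevel.argmax u) u"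
proof -
  have "{l * fst u + m * snd u |l m. A_fun p v l m \<le> 0} = (\<lambda>c. inner c u) ` mgf_sublevel"
    by (auto simp: A_fun_le_0_iff inner_prod_def image_iff) force+
  then show ?thesis
    unfolding D_fun_def using sublevel.is_argmax_argmax[OF assms]
    by (auto simp: sublevel.is_argmax_def intro!: cSup_eq_maximum)
qed

lemma inner_argmax_le_D_fun:
  assumes "sublevel.localizing u" "sublevel.localizing u'"
  shows "inner (sublevel.argmax u') u \<le> D_fun p v (fst u) (snd u)"
  using sublevel.is_argmax_argmax[OF assms(1)] sublevel.is_argmax_argmax[OF assms(2)]
  by (simp add: D_fun_eq_inner[OF assms(1)] sublevel.is_argmax_def)

lemma lam_mu_eq_argmax:
  assumes "sublevel.localizing (1, \<alpha>)"
  shows "lam_mu p v \<alpha> = sublevel.argmax (1, \<alpha>)"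
  unfolding lam_mu_def
proof (rule some_equality)
  have "sublevel.argmax (1, \<alpha>) \<in> mgf_sublevel" "mgf (sublevel.argmax (1, \<alpha>)) = 1"
    using sublevel.is_argmax_argmax[OF assms] sublevel.is_argmax_E_eq_1[OF assms]
    by (auto simp: sublevel.is_argmax_def)
  then show "case sublevel.argmax (1, \<alpha>) of (l, m) \<Rightarrow> A_fun p v l m = 0 \<and> l + \<alpha> * m = D_fun p v 1 \<alpha>"
    using D_fun_eq_inner[OF assms]
    by (auto simp: A_fun_eq_0_iff inner_prod_def mult.commute split: prod.split)
next
  fix c assume "case c of (l, m) \<Rightarrow> A_fun p v l m = 0 \<and> l + \<alpha> * m = D_fun p v 1 \<alpha>"
  then have "c \<in> mgf_sublevel" "inner c (1, \<alpha>) = D_fun p v 1 \<alpha>"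
    by (auto simp: A_fun_eq_0_iff inner_prod_def mult.commute split: prod.splits)
  then have "sublevel.is_argmax (1, \<alpha>) c"
    using sublevel.is_argmax_argmax[OF assms] D_fun_eq_inner[OF assms]
    by (simp add: sublevel.is_argmax_def)
  then show "c = sublevel.argmax (1, \<alpha>)"
    by (rule sublevel.is_argmax_eq_argmax[OF assms])
qed

lemma argmax_eq_lam_mu:
  "sublevel.localizing (1, \<alpha>) \<Longrightarrow> sublevel.argmax (1, \<alpha>) = (lam p v \<alpha>, mu p v \<alpha>)"
  using lam_mu_eq_argmax by (simp add: lam_def mu_def)

end

theorem lemma4p6:
  fixes v :: nat and p :: "nat \<Rightarrow> bool list \<Rightarrow> real" and \<delta>1 \<delta>2 :: real
  assumes "v \<ge> 1"
    and "0 < \<delta>2" and "\<delta>2 < \<delta>1" and "\<delta>1 < 1"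
    and "\<And>k w. length w = v \<Longrightarrow> last w = True \<Longrightarrow> \<delta>2 \<le> p k w \<and> p k w \<le> \<delta>1"
  shows "\<exists>\<Delta>>0. \<forall>(x :: nat \<Rightarrow> real) (\<kappa> :: nat \<Rightarrow> real) \<alpha>0.
     (\<lambda>n. x n / real n) \<longlonglongrightarrow> \<alpha>0 \<longrightarrow> \<bar>a_param p v - \<alpha>0\<bar> \<le> \<Delta> \<longrightarrow> \<kappa> \<longlonglongrightarrow> 0 \<longrightarrow>
     (\<exists>\<epsilon> \<theta> :: nat \<Rightarrow> int \<Rightarrow> int \<Rightarrow> real.
        (\<forall>n m y. (m, y) \<in> B_set (\<kappa> n) n \<longrightarrow>
           - real n * D_fun p v (1 - real_of_int m / real n) (x n / real n - real_of_int y / real n)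
           = - real n * D_fun p v 1 (x n / real n)
             + (lam p v (x n / real n) + \<epsilon> n m y) * real_of_int m
             + (mu p v (x n / real n) + \<theta> n m y) * real_of_int y)
      \<and> (\<lambda>n. Max (insert 0 {\<bar>\<epsilon> n m y\<bar> + \<bar>\<theta> n m y\<bar> | m y. (m, y) \<in> B_set (\<kappa> n) n}))
           \<longlonglongrightarrow> 0)"
proof -
  interpret excursion_chain v p \<delta>1 \<delta>2
    using assms by unfold_locales auto
  obtain \<delta> where "0 < \<delta>" and localizing: "\<And>u. u \<in> ball (1, a_param p v) \<delta> \<Longrightarrow> sublevel.localizing u"
    using sublevel.localizing_near_u0 by blast
  have interior: "(1, \<alpha>0) \<in> interior (Collect sublevel.localizing)"
    and continuous: "continuous (at (1, \<alpha>0) within Collect sublevel.localizing) sublevel.argmax"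
    if "\<bar>a_param p v - \<alpha>0\<bar> \<le> \<delta> / 2" for \<alpha>0
  proof -
    have "(1, \<alpha>0) \<in> ball (1, a_param p v) \<delta>"
      using that \<open>0 < \<delta>\<close> by (simp add: dist_Pair_Pair dist_real_def)
    moreover have "ball (1, a_param p v) \<delta> \<subseteq> interior (Collect sublevel.localizing)"
      using localizing by (intro interior_maximal) auto
    ultimately show "(1, \<alpha>0) \<in> interior (Collect sublevel.localizing)"
      by blast
    then show "continuous (at (1, \<alpha>0) within Collect sublevel.localizing) sublevel.argmax"
      using interior_subset sublevel.argmax_continuous by blast
  qed
  show ?thesis
    using \<open>0 < \<delta>\<close> interior continuous D_fun_eq_inner inner_argmax_le_D_fun argmax_eq_lam_mu
    by (intro exI[of _ "\<delta> / 2"] conjI allI impI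
        support_function_expansion[where U = "Collect sublevel.localizing" and M = sublevel.argmax]) auto
qed

end
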